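(* A graph $3$-partition $\mathscr{G}=(G_{<},G_{=},G_{>},\sigma)$ with vertex set $L$ can be explained by a relaxed scenario if and only if, for every subset $L'\subseteq L$, the restriction $\mathscr{G}_{|L'}=(G_{<}[L'],G_{=}[L'],G_{>}[L'],\sigma_{|L'})$ can be explained by a relaxed scenario.
   Context: All trees are planted phylogenetic trees: a tree $T$ has a distinguished vertex $0_T$ of degree $1$ whose unique neighbor $\rho_T$ is the root, and every vertex other than $0_T$ and the leaves $L(T)$ has at least two children. For $x,y\in V(T)$ write $y\preceq_T x$ if $x$ lies on the path from $0_T$ to $y$; edges are written $uv$ with $v\prec_T u$. $\mathrm{lca}_T$ denotes the last common ancestor. A time map for $T$ is $\tau_T\colon V(T)\to\mathbb{R}$ with $\tau_T(x)<\tau_T(y)$ whenever $x\prec_T y$. A relaxed scenario $\mathscr{S}=(T,S,\sigma,\mu,\tau_T,\tau_S)$ consists of a gene tree $T$ with time map $\tau_T$, a species tree $S$ with time map $\tau_S$, a map $\sigma\colon L(T)\to M$ with $M\subseteq L(S)$, and a map $\mu\colon V(T)\to V(S)\cup E(S)$ such that (S0) $\mu(x)=0_S$ iff $x=0_T$; (S1) $\mu(x)\in L(S)$ iff $x\in L(T)$, in which case $\mu(x)=\sigma(x)$; (S2) if $\mu(x)\in V(S)$ then $\tau_S(\mu(x))=\tau_T(x)$; (S3) if $\mu(x)=uv\in E(S)$ then $\tau_S(v)<\tau_T(x)<\tau_S(u)$. The graphs $G_{=}(\mathscr{S})$, $G_{<}(\mathscr{S})$, $G_{>}(\mathscr{S})$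 have vertex set $L(T)$, and for distinct $x,y$ the pair $xy$ is an edge of $G_{=}(\mathscr{S})$, $G_{<}(\mathscr{S})$, resp. $G_{>}(\mathscr{S})$ iff $\tau_T(\mathrm{lca}_T(x,y))$ is $=$, $<$, resp. $>$ than $\tau_S(\mathrm{lca}_S(\sigma(x),\sigma(y)))$. A graph $3$-partition $\mathscr{G}=(G_{<},G_{=},G_{>},\sigma)$ is an ordered tuple of three edge-disjoint graphs on a common vertex set $L$ with coloring $\sigma\colon L\to M$ such that every unordered pair of distinct elements of $L$ is an edge of exactly one of them; it is explained by $\mathscr{S}$ (with the same $\sigma$) if $G_{<}=G_{<}(\mathscr{S})$, $G_{=}=G_{=}(\mathscr{S})$, $G_{>}=G_{>}(\mathscr{S})$. $G[L']$ denotes the induced subgraph. *)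

theory Defs
  imports Main "HOL.Real"
begin

text \<open>A rooted tree is given by a vertex set V, a set E of directed edges (u,v)
  with v a child of u, and the planted vertex r0 (called 0_T in the paper).\<close>

definition children :: "('v \<times> 'v) set \<Rightarrow> 'v \<Rightarrow> 'v set" where
  "children E v = {w. (v, w) \<in> E}"

definition planted_phylo_tree :: "'v set \<Rightarrow> ('v \<times> 'v) set \<Rightarrow> 'v \<Rightarrow> bool" where
  "planted_phylo_tree V E r0 \<longleftrightarrow>
     finite V \<and> r0 \<in> V \<and> E \<subseteq> V \<times> V \<and>
     (\<forall>u. (u, r0) \<notin> E) \<and>
     (\<forall>v\<in>V. v \<noteq> r0 \<longrightarrow> (\<exists>!u. (u, v) \<in> E)) \<and>
     (\<forall>v\<in>V. (r0, v) \<in> E\<^sup>*) \<and>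
     card (children E r0) = 1 \<and>
     (\<forall>v\<in>V. v \<noteq> r0 \<longrightarrow> children E v \<noteq> {} \<longrightarrow> card (children E v) \<ge> 2)"

definition tree_leaves :: "'v set \<Rightarrow> ('v \<times> 'v) set \<Rightarrow> 'v \<Rightarrow> 'v set" where
  "tree_leaves V E r0 = {v \<in> V. v \<noteq> r0 \<and> children E v = {}}"

text \<open>y \<preceq> x  iff  (x, y) \<in> E^*;  lca = the \<preceq>-least common ancestor.\<close>

definition is_lca :: "'v set \<Rightarrow> ('v \<times> 'v) set \<Rightarrow> 'v \<Rightarrow> 'v \<Rightarrow> 'v \<Rightarrow> bool" where
  "is_lca V E x y z \<longleftrightarrow> z \<in> V \<and> (z, x) \<in> E\<^sup>* \<and> (z, y) \<in> E\<^sup>* \<and>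
     (\<forall>w\<in>V. (w, x) \<in> E\<^sup>* \<and> (w, y) \<in> E\<^sup>* \<longrightarrow> (w, z) \<in> E\<^sup>*)"

definition lca :: "'v set \<Rightarrow> ('v \<times> 'v) set \<Rightarrow> 'v \<Rightarrow> 'v \<Rightarrow> 'v" where
  "lca V E x y = (THE z. is_lca V E x y z)"

definition time_map :: "'v set \<Rightarrow> ('v \<times> 'v) set \<Rightarrow> ('v \<Rightarrow> real) \<Rightarrow> bool" where
  "time_map V E \<tau> \<longleftrightarrow> (\<forall>x\<in>V. \<forall>y\<in>V. (y, x) \<in> E\<^sup>+ \<longrightarrow> \<tau> x < \<tau> y)"

text \<open>Relaxed scenario (T, S, sigma, mu, tauT, tauS); mu maps into V(S) (Inl) or E(S) (Inr).\<close>

definition relaxed_scenario ::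
  "'u set \<Rightarrow> ('u \<times> 'u) set \<Rightarrow> 'u \<Rightarrow> 'w set \<Rightarrow> ('w \<times> 'w) set \<Rightarrow> 'w \<Rightarrow>
   ('u \<Rightarrow> 'w) \<Rightarrow> ('u \<Rightarrow> 'w + ('w \<times> 'w)) \<Rightarrow> ('u \<Rightarrow> real) \<Rightarrow> ('w \<Rightarrow> real) \<Rightarrow> bool" where
  "relaxed_scenario VT ET rT VS ES rS \<sigma> \<mu> \<tau>T \<tau>S \<longleftrightarrow>
     planted_phylo_tree VT ET rT \<and> planted_phylo_tree VS ES rS \<and>
     time_map VT ET \<tau>T \<and> time_map VS ES \<tau>S \<and>
     (\<forall>x\<in>tree_leaves VT ET rT. \<sigma> x \<in> tree_leaves VS ES rS) \<and>
     (\<forall>x\<in>VT. \<mu> x \<in> Inl ` VS \<union> Inr ` ES) \<and>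
     (\<forall>x\<in>VT. \<mu> x = Inl rS \<longleftrightarrow> x = rT) \<and>
     (\<forall>x\<in>VT. \<mu> x \<in> Inl ` tree_leaves VS ES rS \<longleftrightarrow> x \<in> tree_leaves VT ET rT) \<and>
     (\<forall>x\<in>tree_leaves VT ET rT. \<mu> x = Inl (\<sigma> x)) \<and>
     (\<forall>x\<in>VT. \<forall>v. \<mu> x = Inl v \<longrightarrow> \<tau>S v = \<tau>T x) \<and>
     (\<forall>x\<in>VT. \<forall>u v. \<mu> x = Inr (u, v) \<longrightarrow> \<tau>S v < \<tau>T x \<and> \<tau>T x < \<tau>S u)"

text \<open>Graphs on a vertex set L are given by their edge sets (sets of 2-element subsets of L).\<close>

definition all_pairs :: "'a set \<Rightarrow> 'a set set" where
  "all_pairs L = {{x, y} | x y. x \<in> L \<and> y \<in> L \<and> x \<noteq> y}"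

definition graph_3_partition :: "'a set \<Rightarrow> 'a set set \<Rightarrow> 'a set set \<Rightarrow> 'a set set \<Rightarrow> bool" where
  "graph_3_partition L Glt Geq Ggt \<longleftrightarrow>
     Glt \<subseteq> all_pairs L \<and> Geq \<subseteq> all_pairs L \<and> Ggt \<subseteq> all_pairs L \<and>
     Glt \<inter> Geq = {} \<and> Glt \<inter> Ggt = {} \<and> Geq \<inter> Ggt = {} \<and>
     Glt \<union> Geq \<union> Ggt = all_pairs L"

definition induced :: "'a set set \<Rightarrow> 'a set \<Rightarrow> 'a set set" where
  "induced G L' = {e \<in> G. e \<subseteq> L'}"

text \<open>Explained by a relaxed scenario. The gene tree has vertex type 'a + nat with leaf set
  exactly Inl ` L; the species tree has vertex type 'c + nat with species (colours) Inl c.\<close>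

definition explainable :: "'a set \<Rightarrow> 'a set set \<Rightarrow> 'a set set \<Rightarrow> 'a set set \<Rightarrow> ('a \<Rightarrow> 'c) \<Rightarrow> bool" where
  "explainable L Glt Geq Ggt \<sigma> \<longleftrightarrow>
     (\<exists>(VT :: ('a + nat) set) ET rT (VS :: ('c + nat) set) ES rS \<mu> \<tau>T \<tau>S.
        relaxed_scenario VT ET rT VS ES rS (case_sum (\<lambda>x. Inl (\<sigma> x)) (\<lambda>_. undefined)) \<mu> \<tau>T \<tau>S \<and>
        tree_leaves VT ET rT = Inl ` L \<and>
        Glt = {{x, y} | x y. x \<in> L \<and> y \<in> L \<and> x \<noteq> y \<and>
                 \<tau>T (lca VT ET (Inl x) (Inl y)) < \<tau>S (lca VS ES (Inl (\<sigma> x)) (Inl (\<sigma> y)))} \<and>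
        Geq = {{x, y} | x y. x \<in> L \<and> y \<in> L \<and> x \<noteq> y \<and>
                 \<tau>T (lca VT ET (Inl x) (Inl y)) = \<tau>S (lca VS ES (Inl (\<sigma> x)) (Inl (\<sigma> y)))} \<and>
        Ggt = {{x, y} | x y. x \<in> L \<and> y \<in> L \<and> x \<noteq> y \<and>
                 \<tau>T (lca VT ET (Inl x) (Inl y)) > \<tau>S (lca VS ES (Inl (\<sigma> x)) (Inl (\<sigma> y)))})"

end

(* The proof restricts a scenario explaining the whole partition to the genes in L'.
   The restriction T|L' of the gene tree keeps the planted root 0_T and the last common
   ancestors of pairs from L', with the covering relation of the ancestor order as edges;
   this suppresses exactly the vertices that would be left with a single child.  T|L' is
   again a planted phylogenetic tree with leaf set L', it has the same last common
   ancestors on L', and the time map and the reconciliation map mu restrict to it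
   unchanged, so the restricted scenario explains the induced subgraphs.  The converse
   is the case L' = L. *)

theory Submission
  imports Defs
begin

definition covering :: "'v set \<Rightarrow> ('v \<times> 'v) set \<Rightarrow> ('v \<times> 'v) set" where
  "covering K R = {(u, v). u \<in> K \<and> v \<in> K \<and> (u, v) \<in> R \<and> \<not> (\<exists>w\<in>K. (u, w) \<in> R \<and> (w, v) \<in> R)}"

lemma covering_generates:
  assumes "finite K" "trans R" "irrefl R" "u \<in> K" "v \<in> K" "(u, v) \<in> R"
  shows "(u, v) \<in> (covering K R)\<^sup>+"
  using assms(4-)
proof (induction "card {w \<in> K. (u, w) \<in> R \<and> (w, v) \<in> R}" arbitrary: u v rule: less_induct)
  case less
  let ?between = "\<lambda>u v. {w \<in> K. (u, w) \<in> R \<and> (w, v) \<in> R}"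
  show ?case
  proof (cases "?between u v = {}")
    case True
    then show ?thesis using less.prems unfolding covering_def by blast
  next
    case False
    then obtain w where w: "w \<in> K" "(u, w) \<in> R" "(w, v) \<in> R" by blast
    have "(w, w) \<notin> R" using assms(3) by (simp add: irrefl_def)
    then have "?between u w \<subset> ?between u v" "?between w v \<subset> ?between u v"
      using w assms(2) unfolding trans_def by blast+
    then have "card (?between u w) < card (?between u v)" "card (?between w v) < card (?between u v)"
      using assms(1) by (simp_all add: psubset_card_mono)
    then have "(u, w) \<in> (covering K R)\<^sup>+" "(w, v) \<in> (covering K R)\<^sup>+"
      using less.hyps less.prems w by simp_all
    then show ?thesis by simp
  qed
qed

lemma trancl_covering:
  assumes "finite K" "trans R" "irrefl R"
  shows "(covering K R)\<^sup>+ = R \<inter> K \<times> K"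
proof
  have "covering K R \<subseteq> R \<inter> K \<times> K" unfolding covering_def by blast
  moreover have "trans (R \<inter> K \<times> K)" using assms(2) unfolding trans_def by blast
  ultimately show "(covering K R)\<^sup>+ \<subseteq> R \<inter> K \<times> K" by (metis trancl_id trancl_mono subsetI)
  show "R \<inter> K \<times> K \<subseteq> (covering K R)\<^sup>+" using covering_generates[OF assms] by blast
qed

locale planted_tree =
  fixes V :: "'v set" and E :: "('v \<times> 'v) set" and r :: 'v
  assumes planted: "planted_phylo_tree V E r"
begin

lemma finite_V: "finite V" and root_in_V: "r \<in> V" and edges_in_V: "E \<subseteq> V \<times> V"
  and no_edge_to_root: "(u, r) \<notin> E"
  and unique_parent: "v \<in> V \<Longrightarrow> v \<noteq> r \<Longrightarrow> \<exists>!u. (u, v) \<in> E"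
  and reachable_from_root: "v \<in> V \<Longrightarrow> (r, v) \<in> E\<^sup>*"
  and root_one_child: "card (children E r) = 1"
  using planted unfolding planted_phylo_tree_def by auto

lemma below_root: "v \<in> V \<Longrightarrow> v \<noteq> r \<Longrightarrow> (r, v) \<in> E\<^sup>+"
  using reachable_from_root[of v] by (simp add: rtrancl_eq_or_trancl)

lemma parent_eq: "(u, v) \<in> E \<Longrightarrow> (w, v) \<in> E \<Longrightarrow> u = w"
  using unique_parent edges_in_V no_edge_to_root by blast

lemma no_path_to_root: "(u, r) \<notin> E\<^sup>+"
  using no_edge_to_root by (metis tranclD2)

lemma acyclic: "acyclic E"
  unfolding acyclic_def
proof
  fix v
  show "(v, v) \<notin> E\<^sup>+"
  proof
    assume cycle: "(v, v) \<in> E\<^sup>+"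
    then have "v \<in> V" using edges_in_V trancl_subset_Sigma by blast
    then have "(r, v) \<in> E\<^sup>*" by (rule reachable_from_root)
    then show False using cycle
    proof (induction v rule: rtrancl_induct)
      case base
      then show False using no_path_to_root by blast
    next
      case (step u v)
      obtain z where "(v, z) \<in> E\<^sup>*" "(z, v) \<in> E" using tranclD2[OF step.prems] by blast
      moreover have "z = u" using parent_eq step.hyps(2) calculation(2) by blast
      ultimately have "(u, u) \<in> E\<^sup>+" using step.hyps(2) by (metis rtrancl_into_trancl2)
      then show False by (rule step.IH)
    qed
  qed
qed

lemma descendant_not_ancestor: "(u, v) \<in> E\<^sup>+ \<Longrightarrow> (v, u) \<notin> E\<^sup>*"
  using acyclic unfolding acyclic_def by (meson rtrancl_trancl_trancl)

lemma ancestor_antisym: "(a, b) \<in> E\<^sup>* \<Longrightarrow> (b, a) \<in> E\<^sup>* \<Longrightarrow> a = b"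
  using acyclic unfolding acyclic_def by (metis rtranclD trancl_rtrancl_trancl)

lemma ancestors_comparable:
  "(a, v) \<in> E\<^sup>* \<Longrightarrow> (b, v) \<in> E\<^sup>* \<Longrightarrow> (a, b) \<in> E\<^sup>* \<or> (b, a) \<in> E\<^sup>*"
proof (induction v arbitrary: b rule: rtrancl_induct)
  case base
  then show ?case by blast
next
  case (step u v)
  show ?case
  proof (cases "b = v")
    case True
    then show ?thesis using step.hyps by auto
  next
    case False
    then obtain z where "(b, z) \<in> E\<^sup>*" "(z, v) \<in> E"
      using step.prems by (metis rtranclE)
    moreover have "z = u" using parent_eq step.hyps(2) calculation(2) by blast
    ultimately show ?thesis using step.IH by blast
  qed
qed

lemma chain_has_lowest:
  assumes "x \<in> P" "\<forall>a\<in>P. \<forall>b\<in>P. (a, b) \<in> E\<^sup>* \<or> (b, a) \<in> E\<^sup>*"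
  shows "\<exists>z\<in>P. \<forall>w\<in>P. (w, z) \<in> E\<^sup>*"
proof -
  have "finite E" using finite_V edges_in_V by (meson finite_SigmaI finite_subset)
  then have "wf ((E\<^sup>+)\<inverse>)"
    using acyclic by (simp add: finite_acyclic_wf_converse wf_trancl flip: trancl_converse)
  then obtain z where z: "z \<in> P" "\<forall>y. (z, y) \<in> E\<^sup>+ \<longrightarrow> y \<notin> P"
    using assms(1) by (metis wfE_min converse_iff)
  have "(w, z) \<in> E\<^sup>*" if "w \<in> P" for w
    using assms(2) z that by (metis rtranclD)
  then show ?thesis using z(1) by blast
qed

lemma lca_eqI: "is_lca V E x y z \<Longrightarrow> lca V E x y = z"
  unfolding lca_def is_lca_def by (rule the_equality) (auto intro: ancestor_antisym)

lemma is_lca_lca: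
  assumes "x \<in> V" "y \<in> V"
  shows "is_lca V E x y (lca V E x y)"
proof -
  let ?P = "{w \<in> V. (w, x) \<in> E\<^sup>* \<and> (w, y) \<in> E\<^sup>*}"
  have "r \<in> ?P" using root_in_V reachable_from_root assms by blast
  moreover have "\<forall>a\<in>?P. \<forall>b\<in>?P. (a, b) \<in> E\<^sup>* \<or> (b, a) \<in> E\<^sup>*"
    using ancestors_comparable by blast
  ultimately obtain z where "z \<in> ?P" "\<forall>w\<in>?P. (w, z) \<in> E\<^sup>*"
    by (rule chain_has_lowest[THEN bexE])
  then have lca: "is_lca V E x y z" unfolding is_lca_def by blast
  then have "lca V E x y = z" by (rule lca_eqI)
  with lca show ?thesis by simp
qed

lemma lca_in_V: "x \<in> V \<Longrightarrow> y \<in> V \<Longrightarrow> lca V E x y \<in> V"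
  and lca_ancestor1: "x \<in> V \<Longrightarrow> y \<in> V \<Longrightarrow> (lca V E x y, x) \<in> E\<^sup>*"
  and lca_ancestor2: "x \<in> V \<Longrightarrow> y \<in> V \<Longrightarrow> (lca V E x y, y) \<in> E\<^sup>*"
  and lca_lowest: "x \<in> V \<Longrightarrow> y \<in> V \<Longrightarrow> w \<in> V \<Longrightarrow> (w, x) \<in> E\<^sup>* \<Longrightarrow> (w, y) \<in> E\<^sup>* \<Longrightarrow>
      (w, lca V E x y) \<in> E\<^sup>*"
  using is_lca_lca unfolding is_lca_def by blast+

lemma lca_self: "x \<in> V \<Longrightarrow> lca V E x x = x"
  by (rule lca_eqI) (auto simp: is_lca_def)

lemma root_child:
  obtains c where "(r, c) \<in> E" "\<And>v. v \<in> V \<Longrightarrow> v \<noteq> r \<Longrightarrow> (c, v) \<in> E\<^sup>*"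
proof -
  obtain c where "children E r = {c}" using root_one_child card_1_singletonE by blast
  then have rc: "(r, c) \<in> E" and child: "(r, w) \<in> E \<Longrightarrow> w = c" for w
    unfolding children_def by auto
  have below_c: "(c, v) \<in> E\<^sup>*" if "v \<in> V" "v \<noteq> r" for v
    using reachable_from_root[OF that(1)] that(2) child by (metis converse_rtranclE)
  show ?thesis by (rule that[OF rc below_c])
qed

lemma lca_neq_root:
  assumes "x \<in> V" "y \<in> V" "x \<noteq> r" "y \<noteq> r"
  shows "lca V E x y \<noteq> r"
proof
  assume lca_root: "lca V E x y = r"
  obtain c where rc: "(r, c) \<in> E" and below_c: "\<And>v. v \<in> V \<Longrightarrow> v \<noteq> r \<Longrightarrow> (c, v) \<in> E\<^sup>*"
    by (fact root_child)
  have "(c, r) \<in> E\<^sup>*"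
    using lca_lowest[OF assms(1,2)] below_c assms rc edges_in_V lca_root by blast
  then show False using rc no_path_to_root by (meson rtrancl_into_trancl2)
qed

lemma leaf_no_descendant: "a \<in> tree_leaves V E r \<Longrightarrow> (a, w) \<notin> E\<^sup>+"
  unfolding tree_leaves_def children_def by (auto dest: tranclD)

lemma leaf_descendant_eq: "a \<in> tree_leaves V E r \<Longrightarrow> (a, w) \<in> E\<^sup>* \<Longrightarrow> w = a"
  using leaf_no_descendant by (metis rtranclD)

end

definition restricted_vertices :: "'v set \<Rightarrow> ('v \<times> 'v) set \<Rightarrow> 'v \<Rightarrow> 'v set \<Rightarrow> 'v set" where
  "restricted_vertices V E r A = insert r {lca V E x y | x y. x \<in> A \<and> y \<in> A}"

definition restricted_edges :: "'v set \<Rightarrow> ('v \<times> 'v) set \<Rightarrow> 'v \<Rightarrow> 'v set \<Rightarrow> ('v \<times> 'v) set" where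
  "restricted_edges V E r A = covering (restricted_vertices V E r A) (E\<^sup>+)"

locale leaf_restriction = planted_tree +
  fixes A :: "'v set"
  assumes A_leaves: "A \<subseteq> tree_leaves V E r" and A_nonempty: "A \<noteq> {}"
begin

abbreviation "VA \<equiv> restricted_vertices V E r A"
abbreviation "EA \<equiv> restricted_edges V E r A"

lemma A_in_V: "A \<subseteq> V" and root_notin_A: "r \<notin> A"
  using A_leaves unfolding tree_leaves_def by auto

lemma lca_in_VA: "x \<in> A \<Longrightarrow> y \<in> A \<Longrightarrow> lca V E x y \<in> VA"
  unfolding restricted_vertices_def by blast

lemma root_in_VA: "r \<in> VA"
  unfolding restricted_vertices_def by blast

lemma A_subset_VA: "A \<subseteq> VA"
proof
  fix a assume "a \<in> A"
  then show "a \<in> VA" using lca_in_VA[of a a] lca_self A_in_V by auto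
qed

lemma VA_cases: "v \<in> VA \<Longrightarrow> v \<noteq> r \<Longrightarrow> \<exists>x\<in>A. \<exists>y\<in>A. v = lca V E x y"
  unfolding restricted_vertices_def by blast

lemma VA_subset_V: "VA \<subseteq> V"
  unfolding restricted_vertices_def using root_in_V lca_in_V A_in_V by blast

lemma finite_VA: "finite VA"
  using VA_subset_V finite_V by (rule finite_subset)

lemma trancl_EA: "EA\<^sup>+ = E\<^sup>+ \<inter> VA \<times> VA"
proof -
  have "irrefl (E\<^sup>+)" using acyclic by (simp only: acyclic_irrefl)
  then show ?thesis
    unfolding restricted_edges_def by (rule trancl_covering[OF finite_VA trans_trancl])
qed

lemma EA_subset: "EA \<subseteq> E\<^sup>+ \<inter> VA \<times> VA"
  using trancl_EA r_into_trancl' by blast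

lemma rtrancl_EA: "u \<in> VA \<Longrightarrow> v \<in> VA \<Longrightarrow> (u, v) \<in> EA\<^sup>* \<longleftrightarrow> (u, v) \<in> E\<^sup>*"
  by (simp add: rtrancl_eq_or_trancl trancl_EA)

lemma VA_leaves:
  assumes "v \<in> VA" "v \<in> tree_leaves V E r"
  shows "v \<in> A"
proof -
  have "v \<noteq> r" using assms(2) unfolding tree_leaves_def by blast
  then obtain x y where xy: "x \<in> A" "y \<in> A" "v = lca V E x y" using VA_cases assms(1) by blast
  then have "(v, x) \<in> E\<^sup>*" using lca_ancestor1 A_in_V by blast
  then have "x = v" using leaf_descendant_eq assms(2) by blast
  then show ?thesis using xy by simp
qed

lemma EA_covers: "(u, v) \<in> EA \<Longrightarrow> w \<in> VA \<Longrightarrow> (u, w) \<in> E\<^sup>+ \<Longrightarrow> (w, v) \<notin> E\<^sup>+"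
  unfolding restricted_edges_def covering_def by blast

lemma common_ancestor_in_VA:
  assumes "v \<in> VA" "w \<in> VA" "v \<noteq> r" "w \<noteq> r"
  shows "\<exists>z\<in>VA. z \<noteq> r \<and> (z, v) \<in> E\<^sup>* \<and> (z, w) \<in> E\<^sup>*"
proof -
  have "\<exists>x\<in>A. (u, x) \<in> E\<^sup>*" if "u \<in> VA" "u \<noteq> r" for u
    using VA_cases[OF that] lca_ancestor1 A_in_V by blast
  then obtain x x' where x: "x \<in> A" "(v, x) \<in> E\<^sup>*" and x': "x' \<in> A" "(w, x') \<in> E\<^sup>*"
    using assms by meson
  let ?z = "lca V E x x'"
  have xV: "x \<in> V" "x' \<in> V" and "x \<noteq> r" "x' \<noteq> r" using x x' A_in_V root_notin_A by blast+
  then have z: "?z \<in> VA" "?z \<noteq> r" "(?z, x) \<in> E\<^sup>*" "(?z, x') \<in> E\<^sup>*"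
    using lca_in_VA[OF x(1) x'(1)] lca_neq_root lca_ancestor1 lca_ancestor2 by simp_all
  consider "(v, ?z) \<in> E\<^sup>*" | "(w, ?z) \<in> E\<^sup>*" | "(?z, v) \<in> E\<^sup>*" "(?z, w) \<in> E\<^sup>*"
    using ancestors_comparable z(3,4) x(2) x'(2) by blast
  then show ?thesis
  proof cases
    case 1
    then have "(v, w) \<in> E\<^sup>* \<or> (w, v) \<in> E\<^sup>*"
      using ancestors_comparable z(4) x'(2) by (meson rtrancl_trans)
    then show ?thesis using assms by blast
  next
    case 2
    then have "(v, w) \<in> E\<^sup>* \<or> (w, v) \<in> E\<^sup>*"
      using ancestors_comparable z(3) x(2) by (meson rtrancl_trans)
    then show ?thesis using assms by blast
  next
    case 3
    then show ?thesis using z(1,2) by blast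
  qed
qed

lemma below_root_EA: "v \<in> VA \<Longrightarrow> v \<noteq> r \<Longrightarrow> (r, v) \<in> EA\<^sup>+"
  using below_root VA_subset_V root_in_VA by (auto simp: trancl_EA)

lemma EA_parent_exists: "v \<in> VA \<Longrightarrow> v \<noteq> r \<Longrightarrow> \<exists>u. (u, v) \<in> EA"
  using below_root_EA tranclD2 by meson

lemma EA_parent_unique:
  assumes "(u1, v) \<in> EA" "(u2, v) \<in> EA"
  shows "u1 = u2"
proof (rule ccontr)
  assume "u1 \<noteq> u2"
  have in_VA: "u1 \<in> VA" "u2 \<in> VA" and below: "(u1, v) \<in> E\<^sup>+" "(u2, v) \<in> E\<^sup>+"
    using assms EA_subset by blast+
  then have "(u1, u2) \<in> E\<^sup>* \<or> (u2, u1) \<in> E\<^sup>*"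
    using ancestors_comparable by (meson trancl_into_rtrancl)
  then have "(u1, u2) \<in> E\<^sup>+ \<or> (u2, u1) \<in> E\<^sup>+"
    using \<open>u1 \<noteq> u2\<close> by (simp add: rtrancl_eq_or_trancl)
  then show False using EA_covers assms in_VA below by blast
qed

lemma EA_root_one_child: "card (children EA r) = 1"
proof -
  obtain a where "a \<in> A" using A_nonempty by blast
  then have "(r, a) \<in> EA\<^sup>+" using below_root_EA A_subset_VA root_notin_A by blast
  then obtain c where c: "(r, c) \<in> EA" by (meson tranclD)
  have "q = c" if q: "(r, q) \<in> EA" for q
  proof (rule ccontr)
    \<comment> \<open>a common ancestor of q and c other than r would lie strictly between r and one of them\<close>
    assume "q \<noteq> c"
    have "q \<in> VA" "c \<in> VA" "(r, q) \<in> E\<^sup>+" "(r, c) \<in> E\<^sup>+" using q c EA_subset by blast+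
    then have "q \<noteq> r" "c \<noteq> r" using no_path_to_root by blast+
    then obtain z where z: "z \<in> VA" "z \<noteq> r" "(z, q) \<in> E\<^sup>*" "(z, c) \<in> E\<^sup>*"
      using common_ancestor_in_VA \<open>q \<in> VA\<close> \<open>c \<in> VA\<close> by blast
    have "(r, z) \<in> E\<^sup>+" using below_root z(1,2) VA_subset_V by blast
    moreover have "(z, q) \<in> E\<^sup>+ \<or> (z, c) \<in> E\<^sup>+"
      using z(3,4) \<open>q \<noteq> c\<close> by (auto simp: rtrancl_eq_or_trancl)
    ultimately show False using EA_covers q c z(1) by blast
  qed
  then have "children EA r = {c}" using c unfolding children_def by blast
  then show ?thesis by simp
qed

lemma EA_two_children:
  assumes "v \<in> VA" "v \<noteq> r" "v \<notin> A"
  shows "\<exists>q1 q2. q1 \<noteq> q2 \<and> (v, q1) \<in> EA \<and> (v, q2) \<in> EA"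
proof -
  obtain x y where xy: "x \<in> A" "y \<in> A" "v = lca V E x y" using VA_cases assms(1,2) by blast
  have child_towards: "\<exists>q. (v, q) \<in> EA \<and> (q, a) \<in> E\<^sup>*" if "a \<in> A" "(v, a) \<in> E\<^sup>*" for a
  proof -
    have "v \<noteq> a" using that(1) assms(3) by blast
    then have "(v, a) \<in> E\<^sup>+ \<inter> VA \<times> VA"
      using that assms(1) A_subset_VA by (auto simp: rtrancl_eq_or_trancl)
    then obtain q where q: "(v, q) \<in> EA" "(q, a) \<in> EA\<^sup>*"
      unfolding trancl_EA[symmetric] by (meson tranclD)
    then have "q \<in> VA" using EA_subset by blast
    then have "(q, a) \<in> E\<^sup>*" using q(2) rtrancl_EA that(1) A_subset_VA by blast
    then show ?thesis using q(1) by blast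
  qed
  have x_y: "x \<in> V" "y \<in> V" using xy A_in_V by blast+
  obtain q1 q2 where q1: "(v, q1) \<in> EA" "(q1, x) \<in> E\<^sup>*" and q2: "(v, q2) \<in> EA" "(q2, y) \<in> E\<^sup>*"
    using child_towards xy lca_ancestor1[OF x_y] lca_ancestor2[OF x_y] by metis
  have below: "(v, q1) \<in> E\<^sup>+" "q1 \<in> V" using q1(1) EA_subset VA_subset_V by blast+
  have "q1 \<noteq> q2"
  proof
    assume "q1 = q2"
    then have "(q1, v) \<in> E\<^sup>*" using lca_lowest[OF x_y below(2) q1(2)] q2(2) xy(3) by simp
    then show False using descendant_not_ancestor below(1) by blast
  qed
  then show ?thesis using q1 q2 by blast
qed

lemma A_no_EA_children: "a \<in> A \<Longrightarrow> children EA a = {}"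
  using EA_subset leaf_no_descendant A_leaves unfolding children_def by blast

lemma restricted_leaves: "tree_leaves VA EA r = A"
proof
  show "tree_leaves VA EA r \<subseteq> A"
    using EA_two_children unfolding tree_leaves_def children_def by blast
  show "A \<subseteq> tree_leaves VA EA r"
    using A_no_EA_children A_subset_VA root_notin_A unfolding tree_leaves_def by blast
qed

lemma restricted_planted: "planted_phylo_tree VA EA r"
  unfolding planted_phylo_tree_def
proof (intro conjI ballI allI impI)
  show "finite VA" "r \<in> VA" "card (children EA r) = 1"
    by (fact finite_VA root_in_VA EA_root_one_child)+
  show "EA \<subseteq> VA \<times> VA" using EA_subset by blast
  show "(u, r) \<notin> EA" for u using EA_subset no_path_to_root by blast
  show "\<exists>!u. (u, v) \<in> EA" if "v \<in> VA" "v \<noteq> r" for v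
    using EA_parent_exists[OF that] EA_parent_unique by blast
  show "(r, v) \<in> EA\<^sup>*" if "v \<in> VA" for v
    using that root_in_VA VA_subset_V reachable_from_root rtrancl_EA by blast
  show "2 \<le> card (children EA v)" if v: "v \<in> VA" "v \<noteq> r" "children EA v \<noteq> {}" for v
  proof -
    have "v \<notin> A" using v(3) A_no_EA_children by blast
    then obtain q1 q2 where "q1 \<noteq> q2" "{q1, q2} \<subseteq> children EA v"
      using EA_two_children v(1,2) unfolding children_def by blast
    moreover have "finite (children EA v)"
      using finite_VA EA_subset unfolding children_def by (auto intro: finite_subset)
    ultimately show ?thesis by (metis card_2_iff card_mono)
  qed
qed

lemma restricted_lca:
  assumes "x \<in> A" "y \<in> A"
  shows "lca VA EA x y = lca V E x y"
proof (rule planted_tree.lca_eqI[OF planted_tree.intro[OF restricted_planted]])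
  let ?z = "lca V E x y"
  have x_y: "x \<in> V" "y \<in> V" and x_y': "x \<in> VA" "y \<in> VA" and z: "?z \<in> VA"
    using assms A_in_V A_subset_VA lca_in_VA by blast+
  have "(w, ?z) \<in> EA\<^sup>*" if "w \<in> VA" "(w, x) \<in> EA\<^sup>*" "(w, y) \<in> EA\<^sup>*" for w
    using that x_y' z VA_subset_V lca_lowest[OF x_y] by (simp add: rtrancl_EA subsetD)
  then show "is_lca VA EA x y ?z"
    unfolding is_lca_def using z x_y' lca_ancestor1[OF x_y] lca_ancestor2[OF x_y]
    by (simp add: rtrancl_EA)
qed

lemma restricted_time_map: "time_map V E \<tau> \<Longrightarrow> time_map VA EA \<tau>"
  unfolding time_map_def trancl_EA using VA_subset_V by blast

lemma restricted_leaves_Int: "tree_leaves VA EA r = tree_leaves V E r \<inter> VA"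
  using restricted_leaves VA_leaves A_leaves A_subset_VA by blast

end

lemma relaxed_scenario_restrict:
  assumes "relaxed_scenario VT ET rT VS ES rS \<sigma> \<mu> \<tau>T \<tau>S"
    and "planted_phylo_tree VT' ET' rT" "VT' \<subseteq> VT" "time_map VT' ET' \<tau>T"
    and "tree_leaves VT' ET' rT = tree_leaves VT ET rT \<inter> VT'"
  shows "relaxed_scenario VT' ET' rT VS ES rS \<sigma> \<mu> \<tau>T \<tau>S"
  using assms unfolding relaxed_scenario_def by (simp add: subset_iff)

lemma induced_pairs:
  assumes "L' \<subseteq> L" "\<And>x y. x \<in> L' \<Longrightarrow> y \<in> L' \<Longrightarrow> P' x y \<longleftrightarrow> P x y"
  shows "induced {{x, y} | x y. x \<in> L \<and> y \<in> L \<and> x \<noteq> y \<and> P x y} L' =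
    {{x, y} | x y. x \<in> L' \<and> y \<in> L' \<and> x \<noteq> y \<and> P' x y}"
  using assms unfolding induced_def by auto blast+

lemma explainable_restrict:
  fixes \<sigma> :: "'a \<Rightarrow> 'c"
  assumes "explainable L Glt Geq Ggt \<sigma>" "L' \<subseteq> L" "L' \<noteq> {}"
  shows "explainable L' (induced Glt L') (induced Geq L') (induced Ggt L') \<sigma>"
proof -
  let ?\<sigma> = "case_sum (\<lambda>x. Inl (\<sigma> x)) (\<lambda>_. undefined) :: 'a + nat \<Rightarrow> 'c + nat"
  obtain VT :: "('a + nat) set" and ET rT and VS :: "('c + nat) set" and ES rS \<mu> \<tau>T \<tau>S
    where scenario: "relaxed_scenario VT ET rT VS ES rS ?\<sigma> \<mu> \<tau>T \<tau>S"
      and leaves: "tree_leaves VT ET rT = Inl ` L"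
      and Glt: "Glt = {{x, y} | x y. x \<in> L \<and> y \<in> L \<and> x \<noteq> y \<and>
                 \<tau>T (lca VT ET (Inl x) (Inl y)) < \<tau>S (lca VS ES (Inl (\<sigma> x)) (Inl (\<sigma> y)))}"
      and Geq: "Geq = {{x, y} | x y. x \<in> L \<and> y \<in> L \<and> x \<noteq> y \<and>
                 \<tau>T (lca VT ET (Inl x) (Inl y)) = \<tau>S (lca VS ES (Inl (\<sigma> x)) (Inl (\<sigma> y)))}"
      and Ggt: "Ggt = {{x, y} | x y. x \<in> L \<and> y \<in> L \<and> x \<noteq> y \<and>
                 \<tau>T (lca VT ET (Inl x) (Inl y)) > \<tau>S (lca VS ES (Inl (\<sigma> x)) (Inl (\<sigma> y)))}"
    using assms(1) unfolding explainable_def by blast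
  interpret T: leaf_restriction VT ET rT "Inl ` L'"
  proof
    show "planted_phylo_tree VT ET rT" using scenario unfolding relaxed_scenario_def by blast
    show "Inl ` L' \<subseteq> tree_leaves VT ET rT" "Inl ` L' \<noteq> {}" using leaves assms(2,3) by auto
  qed
  have lca: "lca T.VA T.EA (Inl x) (Inl y) = lca VT ET (Inl x) (Inl y)" if "x \<in> L'" "y \<in> L'" for x y
    using that by (simp add: T.restricted_lca)
  have restricted_scenario: "relaxed_scenario T.VA T.EA rT VS ES rS ?\<sigma> \<mu> \<tau>T \<tau>S"
  proof (rule relaxed_scenario_restrict[OF scenario T.restricted_planted T.VA_subset_V])
    show "time_map T.VA T.EA \<tau>T"
      using scenario T.restricted_time_map unfolding relaxed_scenario_def by blast
  qed (fact T.restricted_leaves_Int)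
  have "induced Glt L' = {{x, y} | x y. x \<in> L' \<and> y \<in> L' \<and> x \<noteq> y \<and>
      \<tau>T (lca T.VA T.EA (Inl x) (Inl y)) < \<tau>S (lca VS ES (Inl (\<sigma> x)) (Inl (\<sigma> y)))}"
    "induced Geq L' = {{x, y} | x y. x \<in> L' \<and> y \<in> L' \<and> x \<noteq> y \<and>
      \<tau>T (lca T.VA T.EA (Inl x) (Inl y)) = \<tau>S (lca VS ES (Inl (\<sigma> x)) (Inl (\<sigma> y)))}"
    "induced Ggt L' = {{x, y} | x y. x \<in> L' \<and> y \<in> L' \<and> x \<noteq> y \<and>
      \<tau>T (lca T.VA T.EA (Inl x) (Inl y)) > \<tau>S (lca VS ES (Inl (\<sigma> x)) (Inl (\<sigma> y)))}"
    unfolding Glt Geq Ggt by (rule induced_pairs[OF assms(2)], simp add: lca)+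
  then show ?thesis
    unfolding explainable_def using restricted_scenario T.restricted_leaves by blast
qed

lemma induced_all_pairs: "G \<subseteq> all_pairs L \<Longrightarrow> induced G L = G"
  unfolding induced_def all_pairs_def by blast

theorem corollary6:
  fixes L :: "'a set" and Glt Geq Ggt :: "'a set set" and \<sigma> :: "'a \<Rightarrow> 'c"
  assumes "finite L" and "L \<noteq> {}" and "graph_3_partition L Glt Geq Ggt"
  shows "explainable L Glt Geq Ggt \<sigma> \<longleftrightarrow>
    (\<forall>L'. L' \<subseteq> L \<and> L' \<noteq> {} \<longrightarrow>
       explainable L' (induced Glt L') (induced Geq L') (induced Ggt L') \<sigma>)"
proof
  show "explainable L Glt Geq Ggt \<sigma> \<Longrightarrow> \<forall>L'. L' \<subseteq> L \<and> L' \<noteq> {} \<longrightarrow>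
      explainable L' (induced Glt L') (induced Geq L') (induced Ggt L') \<sigma>"
    using explainable_restrict by blast
  assume "\<forall>L'. L' \<subseteq> L \<and> L' \<noteq> {} \<longrightarrow>
      explainable L' (induced Glt L') (induced Geq L') (induced Ggt L') \<sigma>"
  then have "explainable L (induced Glt L) (induced Geq L) (induced Ggt L) \<sigma>"
    using assms(2) by blast
  moreover have "induced Glt L = Glt" "induced Geq L = Geq" "induced Ggt L = Ggt"
    using assms(3) unfolding graph_3_partition_def by (simp_all add: induced_all_pairs)
  ultimately show "explainable L Glt Geq Ggt \<sigma>" by simp
qed

end
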